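(* Let $W$ be a BISO channel with $\eta=\eta_{KL}(W)$ and capacity $C(W)$. Then $$C_s\big(\mathrm{BEC}(1-\eta),W\big)=\eta-C(W),\qquad C_s\Big(W,\mathrm{BSC}\big(\tfrac{1-\sqrt\eta}{2}\big)\Big)=C(W)-1+h_2\Big(\tfrac{1-\sqrt\eta}{2}\Big).$$
   Context: A binary-input symmetric-output (BISO) channel is a channel $P_{Y|X}$ with input alphabet $\{0,1\}$ and finite output alphabet $\mathcal Y=\{0,\pm1,\dots,\pm l\}$ for some integer $l\ge 1$ (some transition probabilities may be zero), such that $P_{Y|X}(y|0)=P_{Y|X}(-y|1)$ for all $y$. $\mathrm{BSC}(p)$: binary symmetric channel with crossover probability $p$; $\mathrm{BEC}(\varepsilon)$: binary erasure channel with erasure probability $\varepsilon$. All logarithms are base 2; $h_2(p)=-p\log_2p-(1-p)\log_2(1-p)$. Capacity $C(P)=\sup_{P_X}I(X:Y)$. $\eta_{KL}(P)=\sup_{P_X,Q_X}\frac{D(P\circ P_X\|P\circ Q_X)}{D(P_X\|Q_X)}$ (over inputs with $0<D(P_X\|Q_X)<\infty$). For a wiretap setting with main channel $A=P_{Y|X}$ and eavesdropper channel $B=P_{Z|X}$ (same binary input), the secrecy capacity is $C_s(A,B)=\max_{P_X}\big(I(X:Y)-I(X:Z)\big)$. *)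

theory Defs
  imports Complex_Main
begin

text \<open>Binary input alphabet {0,1} is rendered as bool (False = 0, True = 1).
  A channel with output alphabet {-l..l} is a pair (l, W) with
  W :: bool \<Rightarrow> int \<Rightarrow> real, W x y = P(Y=y | X=x); only values on {-l..l} matter.\<close>

definition out_alph :: "nat \<Rightarrow> int set" where
  "out_alph l = {- int l .. int l}"

definition is_channel :: "nat \<Rightarrow> (bool \<Rightarrow> int \<Rightarrow> real) \<Rightarrow> bool" where
  "is_channel l W \<longleftrightarrow> (\<forall>x. \<forall>y\<in>out_alph l. 0 \<le> W x y) \<and> (\<forall>x. (\<Sum>y\<in>out_alph l. W x y) = 1)"

definition biso :: "nat \<Rightarrow> (bool \<Rightarrow> int \<Rightarrow> real) \<Rightarrow> bool" where
  "biso l W \<longleftrightarrow> 1 \<le> l \<and> is_channel l W \<and> (\<forall>y\<in>out_alph l. W False y = W True (- y))"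

definition is_input_dist :: "(bool \<Rightarrow> real) \<Rightarrow> bool" where
  "is_input_dist P \<longleftrightarrow> (\<forall>x. 0 \<le> P x) \<and> P False + P True = 1"

definition out_dist :: "(bool \<Rightarrow> int \<Rightarrow> real) \<Rightarrow> (bool \<Rightarrow> real) \<Rightarrow> int \<Rightarrow> real" where
  "out_dist W P y = (\<Sum>x\<in>UNIV. P x * W x y)"

text \<open>KL divergence (base 2) on a finite set A, with 0 log(0/q) = 0; it is a finite
  real number whenever p is absolutely continuous w.r.t. q on A.\<close>
definition kl :: "'a set \<Rightarrow> ('a \<Rightarrow> real) \<Rightarrow> ('a \<Rightarrow> real) \<Rightarrow> real" where
  "kl A p q = (\<Sum>a\<in>A. if p a = 0 then 0 else p a * log 2 (p a / q a))"

definition abs_cont :: "'a set \<Rightarrow> ('a \<Rightarrow> real) \<Rightarrow> ('a \<Rightarrow> real) \<Rightarrow> bool" where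
  "abs_cont A p q \<longleftrightarrow> (\<forall>a\<in>A. p a \<noteq> 0 \<longrightarrow> q a \<noteq> 0)"

definition mutual_info :: "nat \<Rightarrow> (bool \<Rightarrow> int \<Rightarrow> real) \<Rightarrow> (bool \<Rightarrow> real) \<Rightarrow> real" where
  "mutual_info l W P =
     (\<Sum>x\<in>UNIV. \<Sum>y\<in>out_alph l.
        if P x * W x y = 0 then 0 else P x * W x y * log 2 (W x y / out_dist W P y))"

definition capacity :: "nat \<Rightarrow> (bool \<Rightarrow> int \<Rightarrow> real) \<Rightarrow> real" where
  "capacity l W = Sup {mutual_info l W P | P. is_input_dist P}"

text \<open>Contraction coefficient for KL divergence; D(P_X||Q_X) < \<infinity> iff P_X \<ll> Q_X.\<close>
definition eta_KL :: "nat \<Rightarrow> (bool \<Rightarrow> int \<Rightarrow> real) \<Rightarrow> real" where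
  "eta_KL l W = Sup {kl (out_alph l) (out_dist W P) (out_dist W Q) / kl UNIV P Q | P Q.
      is_input_dist P \<and> is_input_dist Q \<and> abs_cont UNIV P Q \<and> 0 < kl UNIV P Q}"

definition secrecy_capacity ::
  "nat \<Rightarrow> (bool \<Rightarrow> int \<Rightarrow> real) \<Rightarrow> nat \<Rightarrow> (bool \<Rightarrow> int \<Rightarrow> real) \<Rightarrow> real" where
  "secrecy_capacity la A lb B =
     Sup {mutual_info la A P - mutual_info lb B P | P. is_input_dist P}"

text \<open>BEC(e) with output alphabet {0,\<plusminus>1} (l = 1): 0 is the erasure, input 0 \<mapsto> +1, input 1 \<mapsto> -1.\<close>
definition bec :: "real \<Rightarrow> bool \<Rightarrow> int \<Rightarrow> real" where
  "bec e x y = (if y = 0 then e else if y = (if x then -1 else 1) then 1 - e else 0)"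

text \<open>BSC(p) with output alphabet {\<plusminus>1} inside {0,\<plusminus>1} (l = 1, P(0|x) = 0).\<close>
definition bsc :: "real \<Rightarrow> bool \<Rightarrow> int \<Rightarrow> real" where
  "bsc p x y = (if y = (if x then -1 else 1) then 1 - p
                else if y = (if x then 1 else -1) then p else 0)"

definition h2 :: "real \<Rightarrow> real" where
  "h2 p = (if p = 0 then 0 else - p * log 2 p) + (if p = 1 then 0 else - (1 - p) * log 2 (1 - p))"

end

theory Submission
  imports Defs "HOL-Real_Asymp.Real_Asymp"
begin

text \<open>A BISO channel is a mixture of binary symmetric channels: the output pair \<open>{y, -y}\<close>
  occurs with probability \<open>w\<^sub>y = W(y|0) + W(-y|0)\<close>, and given the pair the channel is a BSC
  with bias \<open>\<theta>\<^sub>y = (W(y|0) - W(-y|0)) / w\<^sub>y\<close>. The uniform input \<open>U\<close> achieves capacity, and the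
  golden formula gives \<open>I(P) = C(W) - D(W\<circ>P \<parallel> W\<circ>U)\<close>; for \<open>BEC(1-\<eta>)\<close> the divergence term is
  \<open>\<eta> D(P \<parallel> U)\<close>. With \<open>B = BSC((1-\<surd>\<eta>)/2)\<close>, both secrecy capacities are therefore attained at
  \<open>U\<close> once \<open>\<eta> D(P \<parallel> U) \<ge> D(W\<circ>P \<parallel> W\<circ>U) \<ge> D(B\<circ>P \<parallel> B\<circ>U)\<close> for every input \<open>P\<close>.
  The left inequality is the definition of \<open>\<eta>\<close>. For the right one, the strong data processing
  inequality of each BSC component gives \<open>\<eta> \<le> \<Sum> w\<^sub>y \<theta>\<^sub>y\<^sup>2\<close>, and the divergence of a BSC with
  bias \<open>\<theta>\<close> from its uniform output is a convex function of \<open>\<theta>\<^sup>2\<close>; Jensen's inequality over the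
  components compares \<open>W\<close> with the BSC of bias \<open>\<surd>(\<Sum> w\<^sub>y \<theta>\<^sub>y\<^sup>2) \<ge> \<surd>\<eta>\<close>.\<close>

section \<open>Binary divergence\<close>

definition xlnx :: "real \<Rightarrow> real" where
  "xlnx t = t * ln t"

lemma continuous_on_xlnx: "continuous_on {0..} xlnx"
proof -
  have "continuous (at t within {0..}) xlnx" if "t \<ge> 0" for t
  proof (cases "t = 0")
    case True
    have "((\<lambda>t. t * ln t) \<longlongrightarrow> xlnx 0) (at_right 0)"
      unfolding xlnx_def by real_asymp
    then show ?thesis
      using True by (simp add: continuous_within at_within_Ici_at_right xlnx_def[abs_def])
  next
    case False
    with that have "isCont xlnx t"
      unfolding xlnx_def[abs_def] by (intro continuous_intros) auto
    then show ?thesis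
      using continuous_at_imp_continuous_at_within by blast
  qed
  then show ?thesis
    by (simp add: continuous_on_eq_continuous_within)
qed

lemma xlnx_has_real_derivative_chain:
  assumes "(f has_real_derivative f') (at x)" "f x > 0"
  shows "((\<lambda>x. xlnx (f x)) has_real_derivative (ln (f x) + 1) * f') (at x)"
proof -
  have "(xlnx has_real_derivative ln (f x) + 1) (at (f x))"
    using assms(2) unfolding xlnx_def[abs_def] by (auto intro!: derivative_eq_intros)
  then show ?thesis
    using DERIV_chain2 assms(1) by blast
qed

lemma xlnx_diff_ge:
  assumes "0 \<le> s" "0 < t"
  shows "s - t \<le> xlnx s - s * ln t"
proof (cases "s = 0")
  case True
  then show ?thesis using assms by (simp add: xlnx_def)
next
  case False
  with assms have s: "s > 0" by simp
  have "s * ln (t/s) \<le> s * (t/s - 1)"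
    using s assms by (intro mult_left_mono ln_le_minus_one) auto
  also have "\<dots> = t - s"
    using s by (simp add: field_simps)
  finally show ?thesis
    using s assms by (simp add: xlnx_def ln_div algebra_simps)
qed

text \<open>\<open>bdiv u v\<close> is the binary divergence, in nats, of the distribution
  \<open>((1+u)/2, (1-u)/2)\<close> from \<open>((1+v)/2, (1-v)/2)\<close>.\<close>

definition bdiv :: "real \<Rightarrow> real \<Rightarrow> real" where
  "bdiv u v = (xlnx (1+u) - (1+u) * ln (1+v) + xlnx (1-u) - (1-u) * ln (1-v)) / 2"

lemma bdiv_self [simp]: "bdiv v v = 0"
  by (simp add: bdiv_def xlnx_def)

lemma bdiv_minus: "bdiv (-u) (-v) = bdiv u v"
  by (simp add: bdiv_def algebra_simps)

lemma bdiv_nonneg: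
  assumes "\<bar>u\<bar> \<le> 1" "\<bar>v\<bar> < 1"
  shows "0 \<le> bdiv u v"
proof -
  have "1+u - (1+v) \<le> xlnx (1+u) - (1+u) * ln (1+v)"
    and "1-u - (1-v) \<le> xlnx (1-u) - (1-u) * ln (1-v)"
    using assms by (intro xlnx_diff_ge; simp add: abs_le_iff abs_less_iff)+
  then have "0 \<le> xlnx (1+u) - (1+u) * ln (1+v) + xlnx (1-u) - (1-u) * ln (1-v)"
    by linarith
  then show ?thesis
    unfolding bdiv_def by simp
qed

lemma artanh_eq_ln_diff:
  fixes z :: real
  assumes "\<bar>z\<bar> < 1"
  shows "artanh z = (ln (1+z) - ln (1-z)) / 2"
proof -
  have "0 < 1+z" "0 < 1-z"
    using assms by (auto simp: abs_less_iff)
  then show ?thesis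
    by (simp add: artanh_def ln_div)
qed

lemma bdiv_has_real_derivative:
  assumes "\<bar>c*x\<bar> < 1" "\<bar>w\<bar> < 1"
  shows "((\<lambda>x. bdiv (c*x) w) has_real_derivative c * (artanh (c*x) - artanh w)) (at x)"
proof -
  have pos: "1 + c*x > 0" "1 - c*x > 0"
    using assms(1) by (auto simp: abs_less_iff)
  have "((\<lambda>x. xlnx (1 + c*x)) has_real_derivative (ln (1 + c*x) + 1) * c) (at x)"
    by (rule xlnx_has_real_derivative_chain) (use pos in \<open>auto intro!: derivative_eq_intros\<close>)
  moreover have "((\<lambda>x. xlnx (1 - c*x)) has_real_derivative (ln (1 - c*x) + 1) * (-c)) (at x)"
    by (rule xlnx_has_real_derivative_chain) (use pos in \<open>auto intro!: derivative_eq_intros\<close>)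
  moreover have "((\<lambda>x. (1 + c*x) * ln (1+w)) has_real_derivative c * ln (1+w)) (at x)"
    and "((\<lambda>x. (1 - c*x) * ln (1-w)) has_real_derivative (-c) * ln (1-w)) (at x)"
    by (auto intro!: derivative_eq_intros)
  ultimately have "((\<lambda>x. bdiv (c*x) w) has_real_derivative
      ((ln (1+c*x) + 1) * c - c * ln (1+w) + (ln (1-c*x) + 1) * (-c) - (-c) * ln (1-w)) / 2) (at x)"
    unfolding bdiv_def by (intro DERIV_cdivide DERIV_diff DERIV_add)
  then show ?thesis
    by (rule DERIV_cong) (use assms in \<open>simp add: artanh_eq_ln_diff field_simps\<close>)
qed

lemma continuous_on_bdiv:
  assumes "\<bar>c\<bar> \<le> 1"
  shows "continuous_on {-1..1} (\<lambda>x. bdiv (c*x) w)"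
proof -
  have bound: "0 \<le> 1 + c*x" "0 \<le> 1 - c*x" if "x \<in> {-1..1}" for x
  proof -
    have "\<bar>c*x\<bar> \<le> 1"
      using that assms by (auto simp: abs_mult intro: mult_le_one)
    then show "0 \<le> 1 + c*x" "0 \<le> 1 - c*x"
      by (simp_all add: abs_le_iff)
  qed
  have "continuous_on {-1..1} (\<lambda>x. xlnx (1 + c*x))" "continuous_on {-1..1} (\<lambda>x. xlnx (1 - c*x))"
    by (rule continuous_on_compose2[OF continuous_on_xlnx], intro continuous_intros,
        use bound in auto)+
  then show ?thesis
    unfolding bdiv_def by (intro continuous_intros) auto
qed

lemma DERIV_sign_change_imp_min:
  fixes f f' :: "real \<Rightarrow> real"
  assumes cont: "continuous_on {a..b} f" and v: "v \<in> {a..b}" and x: "x \<in> {a..b}"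
    and deriv: "\<And>t. a < t \<Longrightarrow> t < b \<Longrightarrow> (f has_real_derivative f' t) (at t)"
    and left: "\<And>t. a < t \<Longrightarrow> t < v \<Longrightarrow> f' t \<le> 0"
    and right: "\<And>t. v < t \<Longrightarrow> t < b \<Longrightarrow> 0 \<le> f' t"
  shows "f v \<le> f x"
proof (cases "v \<le> x")
  case True
  show ?thesis
  proof (rule DERIV_nonneg_imp_increasing_open[OF True])
    fix t assume "v < t" "t < x"
    then show "\<exists>y. (f has_real_derivative y) (at t) \<and> 0 \<le> y"
      using v x deriv right by force
  qed (use v x in \<open>auto intro: continuous_on_subset[OF cont]\<close>)
next
  case False
  then have "x \<le> v" by simp
  then show ?thesis
  proof (rule DERIV_nonpos_imp_decreasing_open)
    fix t assume "x < t" "t < v"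
    then show "\<exists>y. (f has_real_derivative y) (at t) \<and> y \<le> 0"
      using v x deriv left by force
  qed (use v x in \<open>auto intro: continuous_on_subset[OF cont]\<close>)
qed

lemma abs_mult_lt_one: "\<bar>p\<bar> \<le> 1 \<Longrightarrow> \<bar>q\<bar> < 1 \<Longrightarrow> \<bar>p * q :: real\<bar> < 1"
  by (metis abs_ge_zero abs_mult dual_order.strict_trans2 mult_left_le_one_le)

lemma artanh_scaled_diff_mono:
  fixes th z1 z2 :: real
  assumes th: "0 < th" "th \<le> 1" and z: "-1 < z1" "z1 \<le> z2" "z2 < 1"
  shows "th * artanh z1 - artanh (th*z1) \<le> th * artanh z2 - artanh (th*z2)"
proof (rule DERIV_nonneg_imp_increasing_open[OF z(2)])
  have deriv: "((\<lambda>t. th * artanh t - artanh (th*t)) has_real_derivative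
      th * (1 / (1 - t^2)) - 1 / (1 - (th*t)^2) * th) (at t)" if "\<bar>t\<bar> < 1" for t
  proof -
    have "(artanh has_real_derivative 1 / (1 - (th*t)^2)) (at (th*t))"
      using that abs_mult_lt_one[of th t] th by (intro artanh_real_has_field_derivative) auto
    from DERIV_chain2[OF this DERIV_cmult_Id]
    show ?thesis
      using that by (intro DERIV_diff DERIV_cmult artanh_real_has_field_derivative) (auto simp: mult.commute)
  qed
  fix t assume "z1 < t" "t < z2"
  with z have t: "\<bar>t\<bar> < 1" by auto
  have "(th*t)^2 \<le> t^2"
    using th by (simp add: power_mult_distrib mult_left_le_one_le power_le_one)
  moreover have "t^2 < 1"
    using t by (simp add: abs_square_less_1)
  ultimately have "1 / (1 - (th*t)^2) \<le> 1 / (1 - t^2)"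
    by (intro divide_left_mono) auto
  then have "th * (1 / (1 - (th*t)^2)) \<le> th * (1 / (1 - t^2))"
    using th by (intro mult_left_mono) auto
  then have "0 \<le> th * (1 / (1 - t^2)) - 1 / (1 - (th*t)^2) * th"
    by (simp add: mult.commute)
  then show "\<exists>y. ((\<lambda>t. th * artanh t - artanh (th*t)) has_real_derivative y) (at t) \<and> 0 \<le> y"
    using deriv[OF t] by blast
next
  have "continuous_on {-1<..<1} (\<lambda>t. th * artanh t - artanh (th*t))"
    using th abs_mult_lt_one[of th] by (intro continuous_intros) (auto simp: abs_less_iff)
  then show "continuous_on {z1..z2} (\<lambda>t. th * artanh t - artanh (th*t))"
    by (rule continuous_on_subset) (use z in auto)
qed

lemma bdiv_scale_le_pos:
  assumes th: "0 < th" "th \<le> 1" and v: "\<bar>v\<bar> < 1" and x: "\<bar>x\<bar> \<le> 1"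
  shows "bdiv (th*x) (th*v) \<le> th^2 * bdiv x v"
proof -
  define K where "K t = th * artanh t - artanh (th*t)" for t
  define G where "G x = th^2 * bdiv (1*x) v - bdiv (th*x) (th*v)" for x
  have "G v \<le> G x"
  proof (rule DERIV_sign_change_imp_min[where f = G and f' = "\<lambda>t. th * (K t - K v)" and a = "-1" and b = 1])
    show "continuous_on {-1..1} G"
      unfolding G_def using th by (intro continuous_intros continuous_on_bdiv) auto
    fix t :: real assume t: "-1 < t" "t < 1"
    then have "\<bar>t\<bar> < 1" "\<bar>th*t\<bar> < 1" "\<bar>th*v\<bar> < 1"
      using th v abs_mult_lt_one[of th] by auto
    then have "(G has_real_derivative
        th^2 * (1 * (artanh (1*t) - artanh v)) - th * (artanh (th*t) - artanh (th*v))) (at t)"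
      unfolding G_def[abs_def] using v by (intro DERIV_diff DERIV_cmult bdiv_has_real_derivative) auto
    then show "(G has_real_derivative th * (K t - K v)) (at t)"
      by (rule DERIV_cong) (simp add: K_def algebra_simps power2_eq_square)
  next
    fix t assume "-1 < t" "t < v"
    then show "th * (K t - K v) \<le> 0"
      using artanh_scaled_diff_mono[OF th, of t v] th v
      by (simp add: K_def mult_nonneg_nonpos abs_less_iff)
  next
    fix t assume "v < t" "t < 1"
    then show "0 \<le> th * (K t - K v)"
      using artanh_scaled_diff_mono[OF th, of v t] th v by (simp add: K_def abs_less_iff)
  qed (use v x in \<open>auto simp: abs_le_iff abs_less_iff\<close>)
  then show ?thesis
    by (simp add: G_def)
qed

text \<open>The strong data processing inequality of a binary symmetric channel: scaling both
  arguments by \<open>\<theta>\<close> (the effect of \<open>BSC((1-\<theta>)/2)\<close>) contracts the divergence by \<open>\<theta>\<^sup>2\<close>.\<close>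

lemma bdiv_scale_le:
  assumes th: "\<bar>th\<bar> \<le> 1" and v: "\<bar>v\<bar> < 1" and x: "\<bar>x\<bar> \<le> 1"
  shows "bdiv (th*x) (th*v) \<le> th^2 * bdiv x v"
proof -
  consider "th > 0" | "th = 0" | "th < 0" by linarith
  then show ?thesis
  proof cases
    case 3
    have "bdiv ((-th)*(-x)) ((-th)*(-v)) \<le> (-th)^2 * bdiv (-x) (-v)"
      using bdiv_scale_le_pos[of "-th" "-v" "-x"] th v x 3 by auto
    then show ?thesis by (simp add: bdiv_minus)
  qed (use bdiv_scale_le_pos th v x in auto)
qed

lemma artanh_le_div:
  fixes z :: real
  assumes "0 \<le> z" "z < 1"
  shows "artanh z \<le> z / (1 - z^2)"
proof -
  define B where "B z = z / (1 - z^2) - artanh z" for z :: real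
  have deriv: "(B has_real_derivative 2*t^2 / (1-t^2)^2) (at t)" if "0 \<le> t" "t < 1" for t
  proof -
    have t2: "t^2 < 1"
      using that by (simp add: abs_square_less_1)
    have "(B has_real_derivative (1*(1-t^2) - t*(-(2*t))) / ((1-t^2)*(1-t^2)) - 1/(1-t^2)) (at t)"
      unfolding B_def[abs_def] using that t2
      by (intro DERIV_diff DERIV_divide artanh_real_has_field_derivative)
         (auto intro!: derivative_eq_intros simp: power2_eq_square)
    then show ?thesis
      by (rule DERIV_cong) (use t2 in \<open>simp add: power2_eq_square divide_simps\<close>)
  qed
  have "B 0 \<le> B z"
  proof (rule DERIV_nonneg_imp_increasing_open[OF assms(1)])
    fix t assume "0 < t" "t < z"
    then show "\<exists>y. (B has_real_derivative y) (at t) \<and> 0 \<le> y"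
      using deriv[of t] assms by auto
  next
    show "continuous_on {0..z} B"
      using assms deriv by (intro continuous_at_imp_continuous_on ballI DERIV_isCont) force
  qed
  then show ?thesis
    by (simp add: B_def)
qed

lemma artanh_div_mono:
  fixes z1 z2 :: real
  assumes "0 < z1" "z1 \<le> z2" "z2 < 1"
  shows "artanh z1 / z1 \<le> artanh z2 / z2"
proof -
  define Q where "Q z = artanh z / z" for z :: real
  have deriv: "(Q has_real_derivative (t * (1 / (1-t^2)) - artanh t) / t^2) (at t)"
    if "0 < t" "t < 1" for t
  proof -
    have "(Q has_real_derivative (1 / (1-t^2) * t - artanh t * 1) / (t*t)) (at t)"
      unfolding Q_def[abs_def] using that
      by (intro DERIV_divide artanh_real_has_field_derivative derivative_intros) auto
    then show ?thesis
      by (rule DERIV_cong) (simp add: power2_eq_square algebra_simps)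
  qed
  have "Q z1 \<le> Q z2"
  proof (rule DERIV_nonneg_imp_increasing_open[OF assms(2)])
    fix t assume "z1 < t" "t < z2"
    with assms have t: "0 < t" "t < 1" by auto
    then have "0 \<le> (t * (1 / (1-t^2)) - artanh t) / t^2"
      using artanh_le_div[of t] by (intro divide_nonneg_pos) auto
    then show "\<exists>y. (Q has_real_derivative y) (at t) \<and> 0 \<le> y"
      using deriv[OF t] by blast
  next
    show "continuous_on {z1..z2} Q"
    proof (intro continuous_at_imp_continuous_on ballI)
      fix t assume "t \<in> {z1..z2}"
      then show "isCont Q t"
        using assms by (intro DERIV_isCont[OF deriv]) auto
    qed
  qed
  then show ?thesis
    by (simp add: Q_def)
qed

text \<open>Since \<open>artanh z / z\<close> increases, \<open>u \<mapsto> bdiv (x*u) 0\<close> is convex as a function of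
  \<open>u\<^sup>2\<close>; it therefore lies above its tangent in the variable \<open>u\<^sup>2\<close> at \<open>\<mu>\<^sup>2\<close>.\<close>

lemma bdiv_tangent_sq:
  assumes x: "0 \<le> x" "x \<le> 1" and mu: "0 < mu" "mu < 1" and u: "0 \<le> u" "u \<le> 1"
  shows "bdiv (x*mu) 0 + (x * artanh (x*mu) / (2*mu)) * (u^2 - mu^2) \<le> bdiv (x*u) 0"
proof (cases "x = 0")
  case False
  with x have xp: "x > 0" by simp
  define c where "c = x * artanh (x*mu) / (2*mu)"
  define H where "H u = bdiv (x*u) 0 - bdiv (x*mu) 0 - c * (u^2 - mu^2)" for u
  define H' where "H' t = x * (x*t) * (artanh (x*t) / (x*t) - artanh (x*mu) / (x*mu))" for t
  have xt: "0 < x*t" "x*t < 1" if "0 < t" "t < 1" for t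
  proof -
    have "x*t \<le> 1*t"
      using that x by (intro mult_right_mono) auto
    then show "x*t < 1"
      using that by linarith
    show "0 < x*t"
      using that xp by simp
  qed
  have "H mu \<le> H u"
  proof (rule DERIV_sign_change_imp_min[where f = H and f' = H' and a = 0 and b = 1])
    have "continuous_on {-1..1} (\<lambda>u. bdiv (x*u) 0)"
      using x by (intro continuous_on_bdiv) auto
    then show "continuous_on {0..1} H"
      unfolding H_def by (intro continuous_intros) (auto elim: continuous_on_subset)
  next
    fix t :: real assume t: "0 < t" "t < 1"
    have "(H has_real_derivative x * (artanh (x*t) - artanh 0) - 0 - c * (2*t - 0)) (at t)"
      unfolding H_def[abs_def] using xt[OF t]
      by (intro DERIV_diff DERIV_cmult bdiv_has_real_derivative derivative_eq_intros refl) auto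
    then show "(H has_real_derivative H' t) (at t)"
      by (rule DERIV_cong) (use t xp mu in \<open>simp add: H'_def c_def field_simps\<close>)
  next
    fix t :: real assume t: "0 < t" "t < mu"
    then have "artanh (x*t) / (x*t) \<le> artanh (x*mu) / (x*mu)"
      using xt[of mu] xt[of t] mu x by (intro artanh_div_mono mult_left_mono) auto
    then show "H' t \<le> 0"
      using t xp by (simp add: H'_def mult_nonneg_nonpos)
  next
    fix t :: real assume t: "mu < t" "t < 1"
    then have "artanh (x*mu) / (x*mu) \<le> artanh (x*t) / (x*t)"
      using xt[of mu] xt[of t] mu x by (intro artanh_div_mono mult_left_mono) auto
    then show "0 \<le> H' t"
      using t mu xp by (simp add: H'_def)
  qed (use mu u in auto)
  then show ?thesis
    by (simp add: H_def c_def)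
qed simp

section \<open>Binary symmetric components\<close>

definition kl_term :: "real \<Rightarrow> real \<Rightarrow> real" where
  "kl_term p q = (if p = 0 then 0 else p * log 2 (p/q))"

lemma kl_eq_sum_kl_term: "kl A p q = (\<Sum>a\<in>A. kl_term (p a) (q a))"
  by (simp add: kl_def kl_term_def)

lemma kl_term_zero [simp]: "kl_term 0 q = 0"
  by (simp add: kl_term_def)

lemma kl_term_self [simp]: "kl_term p p = 0"
  by (simp add: kl_term_def)

lemma kl_self [simp]: "kl A p p = 0"
  by (simp add: kl_eq_sum_kl_term)

lemma kl_term_scale: "c \<ge> 0 \<Longrightarrow> kl_term (c*p) (c*q) = c * kl_term p q"
  by (cases "c = 0") (auto simp: kl_term_def)

lemma kl_term_half_eq:
  assumes "w > 0" "s \<ge> 0" "t > 0"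
  shows "kl_term (w*s/2) (w*t/2) = w * (xlnx s - s * ln t) / (2 * ln 2)"
proof (cases "s = 0")
  case False
  with assms have "s > 0" by simp
  moreover have "w*s/2 / (w*t/2) = s/t"
    using assms by simp
  ultimately show ?thesis
    using assms by (simp add: kl_term_def xlnx_def log_def ln_div field_simps)
qed (simp add: xlnx_def)

definition bias :: "real \<Rightarrow> real \<Rightarrow> real" where
  "bias al be = (al - be) / (al + be)"

lemma abs_bias_le_one: "0 \<le> al \<Longrightarrow> 0 \<le> be \<Longrightarrow> \<bar>bias al be\<bar> \<le> 1"
  by (cases "al + be = 0") (auto simp: bias_def abs_divide abs_le_iff)

text \<open>\<open>pair_kl \<alpha> \<beta> a b\<close> is the contribution of an output pair \<open>{y, -y}\<close> with \<open>W(y|0) = \<alpha>\<close>,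
  \<open>W(-y|0) = \<beta>\<close> to \<open>D(W\<circ>P \<parallel> W\<circ>Q)\<close>, where \<open>P(0) = a\<close> and \<open>Q(0) = b\<close>. Normalised, this pair
  is the binary symmetric channel \<open>BSC((1 - bias \<alpha> \<beta>)/2)\<close>.\<close>

definition pair_kl :: "real \<Rightarrow> real \<Rightarrow> real \<Rightarrow> real \<Rightarrow> real" where
  "pair_kl al be a b =
     kl_term (a*al + (1-a)*be) (b*al + (1-b)*be) + kl_term (a*be + (1-a)*al) (b*be + (1-b)*al)"

lemma pair_kl_zero [simp]: "pair_kl 0 0 a b = 0"
  by (simp add: pair_kl_def)

lemma pair_kl_scale: "c \<ge> 0 \<Longrightarrow> pair_kl (c*al) (c*be) a b = c * pair_kl al be a b"
  using kl_term_scale[of c "a*al + (1-a)*be" "b*al + (1-b)*be"]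
    kl_term_scale[of c "a*be + (1-a)*al" "b*be + (1-b)*al"]
  by (simp add: pair_kl_def algebra_simps)

lemma pair_kl_eq_bdiv:
  assumes ab: "0 \<le> al" "0 \<le> be" "0 < al + be" and a: "0 \<le> a" "a \<le> 1" and b: "0 < b" "b < 1"
  shows "pair_kl al be a b = (al+be) * bdiv (bias al be * (2*a-1)) (bias al be * (2*b-1)) / ln 2"
proof -
  define w where "w = al + be"
  define th where "th = bias al be"
  define x where "x = 2*a-1"
  define y where "y = 2*b-1"
  have w: "w > 0"
    using ab by (simp add: w_def)
  have th: "\<bar>th\<bar> \<le> 1"
    using abs_bias_le_one ab by (simp add: th_def)
  have thx: "\<bar>th*x\<bar> \<le> 1"
    using th a by (simp add: x_def abs_mult mult_le_one)
  have thy: "\<bar>th*y\<bar> < 1"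
    using abs_mult_lt_one th b by (simp add: y_def abs_less_iff)
  have e: "a*al + (1-a)*be = w*(1+th*x)/2" "b*al + (1-b)*be = w*(1+th*y)/2"
       "a*be + (1-a)*al = w*(1-th*x)/2" "b*be + (1-b)*al = w*(1-th*y)/2"
    using w by (simp_all add: w_def th_def bias_def x_def y_def field_simps; simp add: algebra_simps)+
  have "pair_kl al be a b = kl_term (w*(1+th*x)/2) (w*(1+th*y)/2) + kl_term (w*(1-th*x)/2) (w*(1-th*y)/2)"
    unfolding pair_kl_def e ..
  also have "\<dots> = w * (xlnx (1+th*x) - (1+th*x) * ln (1+th*y)) / (2 * ln 2)
                 + w * (xlnx (1-th*x) - (1-th*x) * ln (1-th*y)) / (2 * ln 2)"
    using w thx thy by (simp add: kl_term_half_eq abs_le_iff abs_less_iff)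
  also have "\<dots> = w * bdiv (th*x) (th*y) / ln 2"
    by (simp add: bdiv_def field_simps)
  finally show ?thesis
    by (simp add: w_def th_def x_def y_def)
qed

lemma pair_kl_nonneg:
  assumes "0 \<le> al" "0 \<le> be" and "0 \<le> a" "a \<le> 1" and "0 < b" "b < 1"
  shows "0 \<le> pair_kl al be a b"
proof (cases "al + be = 0")
  case False
  with assms have w: "0 < al + be" by simp
  have "\<bar>bias al be * (2*a-1)\<bar> \<le> 1" "\<bar>bias al be * (2*b-1)\<bar> < 1"
    using abs_bias_le_one[of al be] assms abs_mult_lt_one[of "bias al be" "2*b-1"]
    by (auto simp: abs_mult abs_le_iff abs_less_iff intro: mult_le_one)
  then show ?thesis
    using pair_kl_eq_bdiv[OF assms(1,2) w assms(3-)] bdiv_nonneg w by simp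
qed (use assms in \<open>simp add: add_nonneg_eq_0_iff\<close>)

lemma pair_kl_le_sq_bias:
  assumes ab: "0 \<le> al" "0 \<le> be" and a: "0 \<le> a" "a \<le> 1" and b: "0 < b" "b < 1"
  shows "pair_kl al be a b \<le> (al + be) * (bias al be)^2 * pair_kl 1 0 a b"
proof (cases "al + be = 0")
  case False
  with ab have w: "0 < al + be" by simp
  let ?th = "bias al be"
  have "pair_kl al be a b = (al+be) * bdiv (?th*(2*a-1)) (?th*(2*b-1)) / ln 2"
    by (rule pair_kl_eq_bdiv[OF ab w a b])
  also have "\<dots> \<le> (al+be) * (?th^2 * bdiv (2*a-1) (2*b-1)) / ln 2"
    using abs_bias_le_one[OF ab] a b w
    by (intro divide_right_mono mult_left_mono bdiv_scale_le) (auto simp: abs_le_iff abs_less_iff)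
  also have "\<dots> = (al + be) * ?th^2 * pair_kl 1 0 a b"
    using pair_kl_eq_bdiv[of 1 0 a b] a b by (simp add: bias_def)
  finally show ?thesis .
qed (use ab in \<open>simp add: add_nonneg_eq_0_iff\<close>)

lemma pair_kl_uniform_eq:
  assumes ab: "0 \<le> al" "0 \<le> be" and a: "0 \<le> a" "a \<le> 1"
  shows "ln 2 * pair_kl al be a (1/2) = (al + be) * bdiv (\<bar>2*a-1\<bar> * \<bar>bias al be\<bar>) 0"
proof (cases "al + be = 0")
  case False
  with ab have w: "0 < al + be" by simp
  have "bdiv \<bar>bias al be * (2*a-1)\<bar> 0 = bdiv (bias al be * (2*a-1)) 0"
    using bdiv_minus[of "bias al be * (2*a-1)" 0] by (cases "bias al be * (2*a-1) \<ge> 0") auto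
  then show ?thesis
    using pair_kl_eq_bdiv[OF ab w a, of "1/2"] by (simp add: abs_mult mult.commute)
qed (use ab in \<open>simp add: add_nonneg_eq_0_iff\<close>)

lemma pair_kl_uniform_ge_tangent:
  assumes ab: "0 \<le> al" "0 \<le> be" and a: "0 \<le> a" "a \<le> 1" and mu: "0 < mu" "mu < 1"
  defines "X \<equiv> \<bar>2*a-1\<bar>"
  shows "(al + be) * (bdiv (X*mu) 0 + (X * artanh (X*mu) / (2*mu)) * ((bias al be)^2 - mu^2))
    \<le> ln 2 * pair_kl al be a (1/2)"
proof -
  have "bdiv (X*mu) 0 + (X * artanh (X*mu) / (2*mu)) * (\<bar>bias al be\<bar>^2 - mu^2)
      \<le> bdiv (X * \<bar>bias al be\<bar>) 0"
    using abs_bias_le_one[OF ab] a mu unfolding X_def by (intro bdiv_tangent_sq) auto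
  then show ?thesis
    using ab unfolding pair_kl_uniform_eq[OF ab a] X_def power2_abs by (intro mult_left_mono) auto
qed

section \<open>BISO channels\<close>

lemma mem_out_alph [simp]: "y \<in> out_alph l \<longleftrightarrow> \<bar>y\<bar> \<le> int l"
  by (auto simp: out_alph_def)

lemma sum_out_alph_pairs:
  fixes f :: "int \<Rightarrow> real"
  shows "(\<Sum>y\<in>out_alph n. f y) = f 0 + (\<Sum>y\<in>{1..int n}. f y + f (-y))"
proof (induction n)
  case (Suc n)
  have "out_alph (Suc n) = insert (int n + 1) (insert (-(int n + 1)) (out_alph n))"
    and "{1..int (Suc n)} = insert (int n + 1) {1..int n}"
    by (auto simp: out_alph_def)
  then show ?case
    using Suc by (simp add: out_alph_def)
qed (simp add: out_alph_def)

lemma out_dist_bool: "out_dist W P y = P False * W False y + P True * W True y"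
  by (simp add: out_dist_def UNIV_bool)

lemma input_dist_False:
  "is_input_dist P \<Longrightarrow> P True = 1 - P False \<and> 0 \<le> P False \<and> P False \<le> 1"
  unfolding is_input_dist_def by (metis add_diff_cancel_left' le_add_same_cancel1)

lemma kl_input_eq_pair_kl:
  "is_input_dist P \<Longrightarrow> is_input_dist Q \<Longrightarrow> kl UNIV P Q = pair_kl 1 0 (P False) (Q False)"
  by (simp add: kl_eq_sum_kl_term UNIV_bool pair_kl_def input_dist_False)

lemma biso_nonneg: "biso l W \<Longrightarrow> \<bar>y\<bar> \<le> int l \<Longrightarrow> 0 \<le> W x y"
  by (simp add: biso_def is_channel_def)

lemma biso_True: "biso l W \<Longrightarrow> \<bar>y\<bar> \<le> int l \<Longrightarrow> W True y = W False (-y)"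
  by (auto simp: biso_def dest: bspec[of _ _ "-y"])

lemma biso_pair_weights:
  assumes "biso l W"
  shows "(\<Sum>y\<in>{1..int l}. W False y + W False (-y)) = 1 - W False 0"
proof -
  have "(\<Sum>y\<in>out_alph l. W False y) = 1"
    using assms unfolding biso_def is_channel_def by blast
  then show ?thesis
    unfolding sum_out_alph_pairs by simp
qed

lemma kl_out_dist_eq_sum_pair_kl:
  assumes W: "biso l W" and P: "is_input_dist P" and Q: "is_input_dist Q"
  shows "kl (out_alph l) (out_dist W P) (out_dist W Q) =
     (\<Sum>y\<in>{1..int l}. pair_kl (W False y) (W False (-y)) (P False) (Q False))"
proof -
  have "out_dist W R 0 = W False 0" if "is_input_dist R" for R
    using biso_True[OF W, of 0] that by (simp add: out_dist_bool is_input_dist_def flip: distrib_right)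
  moreover have "kl_term (out_dist W P y) (out_dist W Q y) + kl_term (out_dist W P (-y)) (out_dist W Q (-y))
      = pair_kl (W False y) (W False (-y)) (P False) (Q False)" if "y \<in> {1..int l}" for y
  proof -
    have eqs: "W True y = W False (-y)" "W True (-y) = W False y"
      "P True = 1 - P False" "Q True = 1 - Q False"
      using that biso_True[OF W, of y] biso_True[OF W, of "-y"]
        input_dist_False[OF P] input_dist_False[OF Q] by auto
    show ?thesis
      unfolding pair_kl_def out_dist_bool eqs by (simp add: algebra_simps)
  qed
  ultimately show ?thesis
    using P Q unfolding kl_eq_sum_kl_term sum_out_alph_pairs by simp
qed

lemma mutual_info_golden:
  assumes W: "\<And>x y. y \<in> out_alph l \<Longrightarrow> 0 \<le> W x y" and P: "is_input_dist P"
    and R: "\<And>x y. y \<in> out_alph l \<Longrightarrow> W x y \<noteq> 0 \<Longrightarrow> 0 < R y"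
  shows "mutual_info l W P = (\<Sum>x\<in>UNIV. P x * kl (out_alph l) (W x) R) - kl (out_alph l) (out_dist W P) R"
proof -
  define oP where "oP = out_dist W P"
  have pointwise: "(if P x * W x y = 0 then 0 else P x * W x y * log 2 (W x y / oP y))
      = P x * kl_term (W x y) (R y) - P x * W x y * log 2 (oP y / R y)" if y: "y \<in> out_alph l" for x y
  proof (cases "P x * W x y = 0")
    case False
    have pos: "0 < P x" "0 < W x y"
      using False W[OF y, of x] P by (auto simp: is_input_dist_def less_le)
    have "P x * W x y \<le> oP y"
      unfolding oP_def out_dist_def using W[OF y] P
      by (intro member_le_sum[of x UNIV "\<lambda>x. P x * W x y"]) (auto simp: is_input_dist_def)
    then have "0 < oP y"
      using pos by (smt (verit) mult_pos_pos)
    then have "log 2 (W x y / oP y) = log 2 (W x y / R y) - log 2 (oP y / R y)"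
      using pos R[OF y, of x] by (simp add: log_divide)
    then show ?thesis
      using False pos by (simp add: kl_term_def right_diff_distrib)
  qed (auto simp: kl_term_def)
  have "mutual_info l W P = (\<Sum>x\<in>UNIV. \<Sum>y\<in>out_alph l.
      P x * kl_term (W x y) (R y) - P x * W x y * log 2 (oP y / R y))"
    unfolding mutual_info_def oP_def[symmetric] by (intro sum.cong refl pointwise)
  also have "\<dots> = (\<Sum>x\<in>UNIV. P x * kl (out_alph l) (W x) R)
      - (\<Sum>y\<in>out_alph l. (\<Sum>x\<in>UNIV. P x * W x y) * log 2 (oP y / R y))"
    by (simp add: kl_eq_sum_kl_term sum_subtractf sum_distrib_left sum_distrib_right
        sum.swap[of _ UNIV])
  also have "\<dots> = (\<Sum>x\<in>UNIV. P x * kl (out_alph l) (W x) R) - kl (out_alph l) oP R"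
    by (auto simp: kl_eq_sum_kl_term kl_term_def oP_def out_dist_def intro!: sum.cong)
  finally show ?thesis
    by (simp add: oP_def)
qed

definition uniform_input :: "bool \<Rightarrow> real" where
  "uniform_input x = 1/2"

lemma is_input_dist_uniform [simp]: "is_input_dist uniform_input"
  by (simp add: is_input_dist_def uniform_input_def)

lemma biso_row_True_kl:
  assumes W: "biso l W"
  shows "kl (out_alph l) (W True) (out_dist W uniform_input)
       = kl (out_alph l) (W False) (out_dist W uniform_input)"
proof -
  have U: "out_dist W uniform_input (-y) = out_dist W uniform_input y" if "\<bar>y\<bar> \<le> int l" for y
    using that biso_True[OF W, of y] biso_True[OF W, of "-y"] by (simp add: out_dist_bool uniform_input_def)
  have "kl (out_alph l) (W True) (out_dist W uniform_input)
      = (\<Sum>y\<in>out_alph l. kl_term (W False (-y)) (out_dist W uniform_input (-y)))"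
    unfolding kl_eq_sum_kl_term using biso_True[OF W] U by (intro sum.cong) auto
  also have "\<dots> = kl (out_alph l) (W False) (out_dist W uniform_input)"
    unfolding kl_eq_sum_kl_term
    by (rule sum.reindex_bij_witness[of _ uminus uminus]) auto
  finally show ?thesis .
qed

lemma mutual_info_biso:
  assumes W: "biso l W" and P: "is_input_dist P"
  shows "mutual_info l W P = kl (out_alph l) (W False) (out_dist W uniform_input)
                           - kl (out_alph l) (out_dist W P) (out_dist W uniform_input)"
proof -
  have "0 < out_dist W uniform_input y" if "y \<in> out_alph l" "W x y \<noteq> 0" for x y
    using that biso_nonneg[OF W, of y "\<not> x"] biso_nonneg[OF W, of y x]
    by (cases x) (auto simp: out_dist_bool uniform_input_def)
  then have "mutual_info l W P = (\<Sum>x\<in>UNIV. P x * kl (out_alph l) (W x) (out_dist W uniform_input))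
      - kl (out_alph l) (out_dist W P) (out_dist W uniform_input)"
    using biso_nonneg[OF W] by (intro mutual_info_golden P) auto
  then show ?thesis
    using P biso_row_True_kl[OF W]
    by (simp add: UNIV_bool is_input_dist_def flip: distrib_right)
qed

lemma kl_out_uniform_eq_sum_pair_kl:
  assumes "biso l W" "is_input_dist P"
  shows "kl (out_alph l) (out_dist W P) (out_dist W uniform_input) =
     (\<Sum>y\<in>{1..int l}. pair_kl (W False y) (W False (-y)) (P False) (1/2))"
  using kl_out_dist_eq_sum_pair_kl[OF assms is_input_dist_uniform] by (simp add: uniform_input_def)

lemma kl_out_uniform_nonneg:
  assumes W: "biso l W" and P: "is_input_dist P"
  shows "0 \<le> kl (out_alph l) (out_dist W P) (out_dist W uniform_input)"
  unfolding kl_out_uniform_eq_sum_pair_kl[OF W P]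
  using input_dist_False[OF P] by (intro sum_nonneg pair_kl_nonneg biso_nonneg[OF W]) auto

lemma capacity_biso:
  assumes W: "biso l W"
  shows "capacity l W = mutual_info l W uniform_input"
  unfolding capacity_def
proof (rule cSup_eq_maximum)
  show "mutual_info l W uniform_input \<in> {mutual_info l W P |P. is_input_dist P}"
    using is_input_dist_uniform by blast
  fix x assume "x \<in> {mutual_info l W P |P. is_input_dist P}"
  then obtain P where "is_input_dist P" "x = mutual_info l W P"
    by blast
  then show "x \<le> mutual_info l W uniform_input"
    using mutual_info_biso[OF W] kl_out_uniform_nonneg[OF W] by simp
qed

definition mean_sq_bias :: "nat \<Rightarrow> (bool \<Rightarrow> int \<Rightarrow> real) \<Rightarrow> real" where
  "mean_sq_bias l W =
     (\<Sum>y\<in>{1..int l}. (W False y + W False (-y)) * (bias (W False y) (W False (-y)))^2)"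

lemma mean_sq_bias_le_pair_weights:
  assumes W: "biso l W"
  shows "mean_sq_bias l W \<le> (\<Sum>y\<in>{1..int l}. W False y + W False (-y))"
  unfolding mean_sq_bias_def
proof (intro sum_mono)
  fix y assume "y \<in> {1..int l}"
  then have "0 \<le> W False y" "0 \<le> W False (-y)"
    using biso_nonneg[OF W] by auto
  moreover from this have "(bias (W False y) (W False (-y)))^2 \<le> 1"
    using abs_bias_le_one abs_square_le_1 by blast
  ultimately show "(W False y + W False (-y)) * (bias (W False y) (W False (-y)))^2
      \<le> W False y + W False (-y)"
    by (intro mult_left_le) auto
qed

lemma mean_sq_bias_le_one:
  assumes "biso l W"
  shows "mean_sq_bias l W \<le> 1"
  using mean_sq_bias_le_pair_weights[OF assms] biso_pair_weights[OF assms]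
    biso_nonneg[OF assms, of 0 False] by simp

lemma kl_out_dist_le_mean_sq_bias:
  assumes W: "biso l W" and P: "is_input_dist P" and Q: "is_input_dist Q"
    and b: "0 < Q False" "Q False < 1"
  shows "kl (out_alph l) (out_dist W P) (out_dist W Q) \<le> mean_sq_bias l W * kl UNIV P Q"
proof -
  have "kl (out_alph l) (out_dist W P) (out_dist W Q) =
      (\<Sum>y\<in>{1..int l}. pair_kl (W False y) (W False (-y)) (P False) (Q False))"
    by (rule kl_out_dist_eq_sum_pair_kl[OF W P Q])
  also have "\<dots> \<le> (\<Sum>y\<in>{1..int l}. (W False y + W False (-y)) * (bias (W False y) (W False (-y)))^2
      * pair_kl 1 0 (P False) (Q False))"
    using input_dist_False[OF P] b by (intro sum_mono pair_kl_le_sq_bias biso_nonneg[OF W]) auto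
  also have "\<dots> = mean_sq_bias l W * kl UNIV P Q"
    by (simp add: kl_input_eq_pair_kl[OF P Q] mean_sq_bias_def sum_distrib_right)
  finally show ?thesis .
qed

section \<open>The contraction coefficient\<close>

definition kl_ratios :: "nat \<Rightarrow> (bool \<Rightarrow> int \<Rightarrow> real) \<Rightarrow> real set" where
  "kl_ratios l W = {kl (out_alph l) (out_dist W P) (out_dist W Q) / kl UNIV P Q | P Q.
      is_input_dist P \<and> is_input_dist Q \<and> abs_cont UNIV P Q \<and> 0 < kl UNIV P Q}"

lemma eta_KL_eq_Sup: "eta_KL l W = Sup (kl_ratios l W)"
  by (simp add: eta_KL_def kl_ratios_def)

lemma kl_ratio_mem:
  assumes "is_input_dist P" "0 < kl UNIV P uniform_input"
  shows "kl (out_alph l) (out_dist W P) (out_dist W uniform_input) / kl UNIV P uniform_input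
      \<in> kl_ratios l W"
  unfolding kl_ratios_def using assms is_input_dist_uniform
  by (intro CollectI exI[of _ P] exI[of _ uniform_input]) (auto simp: abs_cont_def uniform_input_def)

lemma abs_cont_input_dist_interior:
  assumes P: "is_input_dist P" and Q: "is_input_dist Q"
    and ac: "abs_cont UNIV P Q" and pos: "0 < kl UNIV P Q"
  shows "0 < Q False \<and> Q False < 1"
proof -
  have "Q x \<noteq> 0" for x
  proof
    assume "Q x = 0"
    then have "P x = 0"
      using ac by (auto simp: abs_cont_def)
    with \<open>Q x = 0\<close> have "P = Q"
      using P Q by (cases x) (auto simp: fun_eq_iff is_input_dist_def all_bool_eq)
    then show False
      using pos by simp
  qed
  from this[of False] this[of True] show ?thesis
    using input_dist_False[OF Q] by auto
qed

lemma kl_ratios_le_mean_sq_bias: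
  assumes W: "biso l W" and r: "r \<in> kl_ratios l W"
  shows "r \<le> mean_sq_bias l W"
proof -
  obtain P Q where P: "is_input_dist P" and Q: "is_input_dist Q"
    and ac: "abs_cont UNIV P Q" and pos: "0 < kl UNIV P Q"
    and r: "r = kl (out_alph l) (out_dist W P) (out_dist W Q) / kl UNIV P Q"
    using r unfolding kl_ratios_def by blast
  have "kl (out_alph l) (out_dist W P) (out_dist W Q) \<le> mean_sq_bias l W * kl UNIV P Q"
    using abs_cont_input_dist_interior[OF P Q ac pos] by (intro kl_out_dist_le_mean_sq_bias W P Q) auto
  then show ?thesis
    unfolding r using pos by (simp add: divide_le_eq)
qed

lemma eta_KL_bounds:
  assumes W: "biso l W"
  shows "0 \<le> eta_KL l W" "eta_KL l W \<le> mean_sq_bias l W" "bdd_above (kl_ratios l W)"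
proof -
  show bdd: "bdd_above (kl_ratios l W)"
    using kl_ratios_le_mean_sq_bias[OF W] by (auto simp: bdd_above_def)
  define P :: "bool \<Rightarrow> real" where "P x = (if x then 0 else 1)" for x
  have P: "is_input_dist P" and "kl UNIV P uniform_input = 1"
    by (simp_all add: P_def is_input_dist_def kl_eq_sum_kl_term UNIV_bool kl_term_def uniform_input_def)
  then have mem: "kl (out_alph l) (out_dist W P) (out_dist W uniform_input) \<in> kl_ratios l W"
    using kl_ratio_mem[OF P, of l W] by simp
  show "0 \<le> eta_KL l W"
    unfolding eta_KL_eq_Sup using kl_out_uniform_nonneg[OF W P] cSup_upper[OF mem bdd] by linarith
  show "eta_KL l W \<le> mean_sq_bias l W"
    unfolding eta_KL_eq_Sup using mem kl_ratios_le_mean_sq_bias[OF W] by (intro cSup_least) auto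
qed

lemma kl_out_uniform_le_eta_KL:
  assumes W: "biso l W" and P: "is_input_dist P"
  shows "kl (out_alph l) (out_dist W P) (out_dist W uniform_input) \<le> eta_KL l W * kl UNIV P uniform_input"
proof (cases "kl UNIV P uniform_input = 0")
  case True
  have "kl (out_alph l) (out_dist W P) (out_dist W uniform_input) \<le> mean_sq_bias l W * kl UNIV P uniform_input"
    by (rule kl_out_dist_le_mean_sq_bias[OF W P]) (auto simp: uniform_input_def)
  then show ?thesis
    using True by simp
next
  case False
  have "0 \<le> kl UNIV P uniform_input"
    using input_dist_False[OF P] pair_kl_nonneg[of 1 0 "P False" "1/2"]
    by (simp add: kl_input_eq_pair_kl[OF P] uniform_input_def)
  with False have pos: "0 < kl UNIV P uniform_input" by simp
  have "kl (out_alph l) (out_dist W P) (out_dist W uniform_input) / kl UNIV P uniform_input \<le> eta_KL l W"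
    unfolding eta_KL_eq_Sup by (rule cSup_upper[OF kl_ratio_mem[OF P pos] eta_KL_bounds(3)[OF W]])
  then show ?thesis
    using pos by (simp add: divide_le_eq)
qed

section \<open>Erasure and symmetric channels\<close>

lemma out_alph_one: "out_alph 1 = {-1, 0, 1}"
  by (auto simp: out_alph_def)

lemma biso_bec: "0 \<le> e \<Longrightarrow> e \<le> 1 \<Longrightarrow> biso 1 (bec e)"
  unfolding biso_def is_channel_def out_alph_one by (auto simp: bec_def)

lemma biso_bsc: "0 \<le> r \<Longrightarrow> r \<le> 1 \<Longrightarrow> biso 1 (bsc r)"
  unfolding biso_def is_channel_def out_alph_one by (auto simp: bsc_def)

lemma mutual_info_bec:
  assumes e: "0 \<le> e" "e \<le> 1" and P: "is_input_dist P"
  shows "mutual_info 1 (bec e) P = (1 - e) * (1 - kl UNIV P uniform_input)"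
proof -
  have "kl (out_alph 1) (bec e False) (out_dist (bec e) uniform_input) = kl_term e e + kl_term (1-e) ((1-e)/2)"
    unfolding kl_eq_sum_kl_term out_alph_one by (simp add: out_dist_bool uniform_input_def bec_def)
  also have "\<dots> = 1 - e"
  proof (cases "e = 1")
    case False
    with e have "(1-e) / ((1-e)/2) = 2" by (simp add: field_simps)
    then show ?thesis by (simp add: kl_term_def)
  qed (simp add: kl_term_def)
  finally have row: "kl (out_alph 1) (bec e False) (out_dist (bec e) uniform_input) = 1 - e" .
  have "kl (out_alph 1) (out_dist (bec e) P) (out_dist (bec e) uniform_input)
      = pair_kl ((1-e)*1) ((1-e)*0) (P False) (1/2)"
    using kl_out_uniform_eq_sum_pair_kl[OF biso_bec[OF e] P] by (simp add: bec_def)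
  also have "\<dots> = (1-e) * kl UNIV P uniform_input"
    using e pair_kl_scale[of "1-e" 1 0] kl_input_eq_pair_kl[OF P is_input_dist_uniform]
    by (simp add: uniform_input_def)
  finally show ?thesis
    using mutual_info_biso[OF biso_bec[OF e] P] row by (simp add: algebra_simps)
qed

lemma kl_term_half: "0 < x \<Longrightarrow> kl_term x (1/2) = x + x * log 2 x"
  by (simp add: kl_term_def log_mult distrib_left)

lemma mutual_info_bsc:
  assumes r: "0 \<le> r" "r \<le> 1" and P: "is_input_dist P"
  shows "mutual_info 1 (bsc r) P = 1 - h2 r - pair_kl (1-r) r (P False) (1/2)"
proof -
  have "kl (out_alph 1) (bsc r False) (out_dist (bsc r) uniform_input) = kl_term r (1/2) + kl_term (1-r) (1/2)"
    unfolding kl_eq_sum_kl_term out_alph_one by (simp add: out_dist_bool uniform_input_def bsc_def flip: add_divide_distrib)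
  also have "\<dots> = 1 - h2 r"
    using r by (cases "r = 0 \<or> r = 1") (auto simp: kl_term_half h2_def algebra_simps)
  finally show ?thesis
    using mutual_info_biso[OF biso_bsc[OF r] P] kl_out_uniform_eq_sum_pair_kl[OF biso_bsc[OF r] P]
    by (simp add: bsc_def)
qed

section \<open>Comparison with a binary symmetric channel\<close>

text \<open>Sum the tangent bounds of the components at a common \<open>\<mu>\<close>; the missing weight
  \<open>1 - \<Sum> w\<^sub>y = W(0|0)\<close> is absorbed by the tangent at \<open>u = 0\<close>.\<close>

lemma bdiv_le_kl_out_uniform:
  assumes W: "biso l W" and P: "is_input_dist P"
    and mu: "0 < mu" "mu < 1" "mu^2 \<le> mean_sq_bias l W"
  shows "bdiv (\<bar>2 * P False - 1\<bar> * mu) 0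
    \<le> ln 2 * kl (out_alph l) (out_dist W P) (out_dist W uniform_input)"
proof -
  define X where "X = \<bar>2 * P False - 1\<bar>"
  define c where "c = X * artanh (X*mu) / (2*mu)"
  define Dm where "Dm = bdiv (X*mu) 0"
  define w where "w y = W False y + W False (-y)" for y
  define th where "th y = bias (W False y) (W False (-y))" for y
  define Wt where "Wt = (\<Sum>y\<in>{1..int l}. w y)"
  have a: "0 \<le> P False" "P False \<le> 1" and X: "0 \<le> X" "X \<le> 1"
    using input_dist_False[OF P] by (auto simp: X_def)
  have Wt: "Wt \<le> 1"
    using biso_pair_weights[OF W] biso_nonneg[OF W, of 0 False] by (simp add: Wt_def w_def)
  have "Dm + c * (0^2 - mu^2) \<le> bdiv (X*0) 0"
    unfolding Dm_def c_def using X mu by (intro bdiv_tangent_sq) auto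
  then have Dm_le: "Dm \<le> c * mu^2"
    by simp
  have "0 \<le> Dm"
    unfolding Dm_def using X mu by (intro bdiv_nonneg) (auto simp: abs_mult intro: mult_le_one)
  with Dm_le have "0 \<le> c * mu^2"
    by linarith
  with mu have c: "0 \<le> c"
    by (simp add: zero_le_mult_iff)
  have "(1 - Wt) * Dm \<le> (1 - Wt) * (c * mu^2)"
    using Dm_le Wt by (intro mult_left_mono) auto
  then have "Dm \<le> Wt * Dm + (1 - Wt) * (c * mu^2)"
    by (simp add: left_diff_distrib)
  also have "\<dots> \<le> Wt * Dm + c * (mean_sq_bias l W - Wt * mu^2)"
    using mult_left_mono[OF mu(3) c] by (simp add: algebra_simps)
  also have "\<dots> = (\<Sum>y\<in>{1..int l}. Dm * w y + c * (w y * (th y)^2) - c * mu^2 * w y)"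
    unfolding Wt_def mean_sq_bias_def w_def[symmetric] th_def[symmetric]
    by (simp only: sum.distrib sum_subtractf sum_distrib_left[symmetric]) (simp add: algebra_simps)
  also have "\<dots> = (\<Sum>y\<in>{1..int l}. w y * (Dm + c * ((th y)^2 - mu^2)))"
    by (intro sum.cong) (simp_all add: algebra_simps)
  also have "\<dots> \<le> (\<Sum>y\<in>{1..int l}. ln 2 * pair_kl (W False y) (W False (-y)) (P False) (1/2))"
    unfolding w_def th_def Dm_def c_def X_def
    using biso_nonneg[OF W] a mu by (intro sum_mono pair_kl_uniform_ge_tangent) auto
  also have "\<dots> = ln 2 * kl (out_alph l) (out_dist W P) (out_dist W uniform_input)"
    by (simp add: kl_out_uniform_eq_sum_pair_kl[OF W P] sum_distrib_left)
  finally show ?thesis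
    by (simp add: Dm_def X_def)
qed

lemma pair_kl_bsc_le_kl_out_uniform:
  assumes W: "biso l W" and P: "is_input_dist P"
  defines "r \<equiv> (1 - sqrt (eta_KL l W)) / 2"
  shows "pair_kl (1 - r) r (P False) (1/2) \<le> kl (out_alph l) (out_dist W P) (out_dist W uniform_input)"
proof -
  define s where "s = sqrt (eta_KL l W)"
  define X where "X = \<bar>2 * P False - 1\<bar>"
  define D where "D = kl (out_alph l) (out_dist W P) (out_dist W uniform_input)"
  have s: "0 \<le> s" "s \<le> 1" "s^2 \<le> mean_sq_bias l W"
    using eta_KL_bounds[OF W] mean_sq_bias_le_one[OF W] by (auto simp: s_def)
  have a: "0 \<le> P False" "P False \<le> 1" and X: "0 \<le> X" "X \<le> 1"
    using input_dist_False[OF P] by (auto simp: X_def)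
  have "ln 2 * pair_kl (1 - r) r (P False) (1/2) = bdiv (X*s) 0"
    using pair_kl_uniform_eq[of "1-r" r "P False"] s a
    by (simp add: r_def s_def[symmetric] X_def bias_def)
  also have "\<dots> \<le> ln 2 * D"
  proof (cases "s = 0")
    case True
    then show ?thesis
      using kl_out_uniform_nonneg[OF W P] by (simp add: D_def)
  next
    case False
    with s have s0: "0 < s" by simp
    have "continuous_on {0..s} (\<lambda>mu. bdiv (X*mu) 0)"
      using continuous_on_bdiv[of X 0] X s by (auto elim: continuous_on_subset)
    then have "((\<lambda>mu. bdiv (X*mu) 0) \<longlongrightarrow> bdiv (X*s) 0) (at_left s)"
      using s0 by (rule continuous_on_Icc_at_leftD)
    moreover have "eventually (\<lambda>mu. bdiv (X*mu) 0 \<le> ln 2 * D) (at_left s)"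
      using eventually_at_left_real[OF s0]
    proof (rule eventually_mono)
      fix mu assume "mu \<in> {0<..<s}"
      moreover from this have "mu^2 \<le> s^2"
        by (intro power_mono) auto
      with s have "mu^2 \<le> mean_sq_bias l W"
        by linarith
      ultimately show "bdiv (X*mu) 0 \<le> ln 2 * D"
        unfolding D_def X_def using s by (intro bdiv_le_kl_out_uniform W P) auto
    qed
    ultimately show ?thesis
      by (rule tendsto_upperbound) simp
  qed
  finally show ?thesis
    by (simp add: D_def)
qed

section \<open>Secrecy capacities\<close>

lemma secrecy_capacity_attained:
  assumes "is_input_dist P0"
    and "\<And>P. is_input_dist P \<Longrightarrow>
      mutual_info la A P - mutual_info lb B P \<le> mutual_info la A P0 - mutual_info lb B P0"
  shows "secrecy_capacity la A lb B = mutual_info la A P0 - mutual_info lb B P0"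
  unfolding secrecy_capacity_def by (rule cSup_eq_maximum) (use assms in auto)

lemma eta_KL_le_one: "biso l W \<Longrightarrow> eta_KL l W \<le> 1"
  using eta_KL_bounds(2) mean_sq_bias_le_one by (rule order.trans)

lemma mutual_info_eq_capacity_minus_kl:
  assumes W: "biso l W" and P: "is_input_dist P"
  shows "mutual_info l W P = capacity l W - kl (out_alph l) (out_dist W P) (out_dist W uniform_input)"
  using mutual_info_biso[OF W P] mutual_info_biso[OF W is_input_dist_uniform] capacity_biso[OF W]
  by simp

lemma secrecy_capacity_bec_eta_KL:
  assumes W: "biso l W"
  shows "secrecy_capacity 1 (bec (1 - eta_KL l W)) l W = eta_KL l W - capacity l W"
proof -
  let ?e = "eta_KL l W"
  have e: "0 \<le> 1 - ?e" "1 - ?e \<le> 1"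
    using eta_KL_bounds(1)[OF W] eta_KL_le_one[OF W] by auto
  have "secrecy_capacity 1 (bec (1 - ?e)) l W
      = mutual_info 1 (bec (1 - ?e)) uniform_input - mutual_info l W uniform_input"
  proof (rule secrecy_capacity_attained[OF is_input_dist_uniform])
    fix P assume P: "is_input_dist P"
    show "mutual_info 1 (bec (1 - ?e)) P - mutual_info l W P
        \<le> mutual_info 1 (bec (1 - ?e)) uniform_input - mutual_info l W uniform_input"
      using kl_out_uniform_le_eta_KL[OF W P] mutual_info_bec[OF e P] mutual_info_bec[OF e is_input_dist_uniform]
        mutual_info_eq_capacity_minus_kl[OF W P] mutual_info_eq_capacity_minus_kl[OF W is_input_dist_uniform]
      by (simp add: algebra_simps)
  qed
  then show ?thesis
    using mutual_info_bec[OF e is_input_dist_uniform] mutual_info_eq_capacity_minus_kl[OF W is_input_dist_uniform]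
    by simp
qed

lemma secrecy_capacity_bsc_eta_KL:
  assumes W: "biso l W"
  defines "r \<equiv> (1 - sqrt (eta_KL l W)) / 2"
  shows "secrecy_capacity l W 1 (bsc r) = capacity l W - 1 + h2 r"
proof -
  have "0 \<le> sqrt (eta_KL l W)" "sqrt (eta_KL l W) \<le> 1"
    using eta_KL_bounds(1)[OF W] eta_KL_le_one[OF W] by auto
  then have r: "0 \<le> r" "r \<le> 1"
    unfolding r_def by (simp_all del: real_sqrt_ge_0_iff real_sqrt_le_1_iff)
  have "secrecy_capacity l W 1 (bsc r)
      = mutual_info l W uniform_input - mutual_info 1 (bsc r) uniform_input"
  proof (rule secrecy_capacity_attained[OF is_input_dist_uniform])
    fix P assume P: "is_input_dist P"
    show "mutual_info l W P - mutual_info 1 (bsc r) P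
        \<le> mutual_info l W uniform_input - mutual_info 1 (bsc r) uniform_input"
      using pair_kl_bsc_le_kl_out_uniform[OF W P] mutual_info_bsc[OF r P] mutual_info_bsc[OF r is_input_dist_uniform]
        mutual_info_eq_capacity_minus_kl[OF W P] mutual_info_eq_capacity_minus_kl[OF W is_input_dist_uniform]
      by (simp add: r_def uniform_input_def pair_kl_def)
  qed
  then show ?thesis
    using mutual_info_bsc[OF r is_input_dist_uniform] mutual_info_eq_capacity_minus_kl[OF W is_input_dist_uniform]
    by (simp add: uniform_input_def pair_kl_def)
qed

theorem mainTheorem10:
  fixes l :: nat and W :: "bool \<Rightarrow> int \<Rightarrow> real"
  assumes "biso l W"
  shows "secrecy_capacity 1 (bec (1 - eta_KL l W)) l W = eta_KL l W - capacity l W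
     \<and> secrecy_capacity l W 1 (bsc ((1 - sqrt (eta_KL l W)) / 2))
         = capacity l W - 1 + h2 ((1 - sqrt (eta_KL l W)) / 2)"
  using secrecy_capacity_bec_eta_KL[OF assms] secrecy_capacity_bsc_eta_KL[OF assms] by simp

end
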